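(* Let $A$ be a noetherian ring, $M$ a finitely generated $A$-module, $F$ a finitely generated free $A$-module and $M\to F$ a versal map. Then the induced homomorphism of graded $A$-algebras $\Gamma(M^\ast)^\vee\to\Gamma(F^\ast)^\vee$ (the degreewise dual of $\Gamma(F^\ast)\to\Gamma(M^\ast)$, which is induced by the dual map $F^\ast\to M^\ast$) is injective.
   Context: $N^\ast=\operatorname{Hom}_A(N,A)$. A homomorphism $\phi\colon M\to F$ with $F$ finitely generated and free is versal if every homomorphism $M\to E$ with $E$ a free $A$-module factors as $h\circ\phi$ for some $h\colon F\to E$. The algebra of divided powers $\Gamma(N)$ of an $A$-module $N$ is $A[X(n,x)]_{(n,x)\in\mathbb{N}\times N}$ modulo the ideal generated by $X(0,x)-1$, $X(n,fx)-f^nX(n,x)$, $X(m,x)X(n,x)-\binom{m+n}{m}X(m+n,x)$, and $X(n,x+y)-\sum_{i+j=n}X(i,x)X(j,y)$, graded with $X(n,x)$ in degree $n$. The graded dual $\Gamma(N)^\vee=\bigoplus_n\operatorname{Hom}_A(\Gamma^n(N),A)$ is a graded $A$-algebra with product $(u\bullet v)(\gamma)=(u\otimes v)(\Delta(\gamma))$, where $\Delta$ is the comultiplication induced by the diagonal $N\to N\oplus N$. *)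

theory Defs
  imports Complex_Main "HOL-Library.Multiset" "HOL-Library.Poly_Mapping"
begin

definition noetherian_ring :: "'a::comm_ring_1 itself \<Rightarrow> bool" where
  "noetherian_ring _ \<longleftrightarrow>
     (\<forall>I::'a set. module.subspace ((*)) I \<longrightarrow> (\<exists>S. finite S \<and> module.span ((*)) S = I))"

definition fin_gen_module :: "('a::comm_ring_1 \<Rightarrow> 'm::ab_group_add \<Rightarrow> 'm) \<Rightarrow> bool" where
  "fin_gen_module s \<longleftrightarrow> module s \<and> (\<exists>S. finite S \<and> module.span s S = UNIV)"

definition fin_gen_free_module :: "('a::comm_ring_1 \<Rightarrow> 'm::ab_group_add \<Rightarrow> 'm) \<Rightarrow> bool" where
  "fin_gen_free_module s \<longleftrightarrow> module s \<and>
     (\<exists>B. finite B \<and> module.independent s B \<and> module.span s B = UNIV)"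

definition dual_module :: "('a::comm_ring_1 \<Rightarrow> 'm::ab_group_add \<Rightarrow> 'm) \<Rightarrow> ('m \<Rightarrow> 'a) set" where
  "dual_module s = {g. module_hom s ((*)) g}"

definition dual_map :: "('m \<Rightarrow> 'f) \<Rightarrow> ('f \<Rightarrow> 'a) \<Rightarrow> ('m \<Rightarrow> 'a)" where
  "dual_map \<phi> l = l \<circ> \<phi>"

text \<open>The free module A^(B) (B a set of indices in nat): finitely supported functions
  vanishing outside B.  g is an A-linear map from the module (type 'm, scaling s) into A^(B).\<close>
definition lin_to_free :: "('a::comm_ring_1 \<Rightarrow> 'm::ab_group_add \<Rightarrow> 'm) \<Rightarrow> nat set \<Rightarrow> ('m \<Rightarrow> nat \<Rightarrow> 'a) \<Rightarrow> bool" where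
  "lin_to_free s B g \<longleftrightarrow>
     (\<forall>x. finite {i. g x i \<noteq> 0} \<and> {i. g x i \<noteq> 0} \<subseteq> B) \<and>
     (\<forall>x y. g (x + y) = (\<lambda>i. g x i + g y i)) \<and>
     (\<forall>c x. g (s c x) = (\<lambda>i. c * g x i))"

text \<open>Versal map phi : M -> F (F is assumed finitely generated free separately): every linear
  map from M into a free module A^(B) factors as h o phi with h : F -> A^(B) linear.\<close>
definition versal :: "('a::comm_ring_1 \<Rightarrow> 'm::ab_group_add \<Rightarrow> 'm) \<Rightarrow> ('a \<Rightarrow> 'f::ab_group_add \<Rightarrow> 'f)
                        \<Rightarrow> ('m \<Rightarrow> 'f) \<Rightarrow> bool" where
  "versal sM sF \<phi> \<longleftrightarrow> module_hom sM sF \<phi> \<and>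
     (\<forall>B g. lin_to_free sM B g \<longrightarrow> (\<exists>h. lin_to_free sF B h \<and> (\<forall>x. g x = h (\<phi> x))))"

text \<open>The polynomial ring A[X(n,x)] over variables (n,x) in nat x V: polynomials are finitely
  supported maps from monomials (multisets of variables) to coefficients.\<close>
type_synonym ('v, 'a) gpoly = "(nat \<times> 'v) multiset \<Rightarrow>\<^sub>0 'a"

definition Xv :: "nat \<Rightarrow> 'v \<Rightarrow> ('v, 'a::comm_ring_1) gpoly" where
  "Xv n x = Poly_Mapping.single {#(n, x)#} 1"

definition Cst :: "'a::comm_ring_1 \<Rightarrow> ('v, 'a) gpoly" where
  "Cst c = Poly_Mapping.single {#} c"

text \<open>The defining relations of Gamma(N), for N a submodule of the function module 'm => 'a
  (we use it for N = M* and N = F*), with pointwise addition and scaling.\<close>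
definition gamma_rels :: "('m \<Rightarrow> 'a::comm_ring_1) set \<Rightarrow> ('m \<Rightarrow> 'a, 'a) gpoly set" where
  "gamma_rels N =
     {Xv 0 x - 1 | x. x \<in> N} \<union>
     {Xv n (\<lambda>z. f * x z) - Cst (f ^ n) * Xv n x | n f x. x \<in> N} \<union>
     {Xv m x * Xv n x - Cst (of_nat ((m + n) choose m)) * Xv (m + n) x | m n x. x \<in> N} \<union>
     {Xv n (\<lambda>z. x z + y z) - (\<Sum>i\<le>n. Xv i x * Xv (n - i) y) | n x y. x \<in> N \<and> y \<in> N}"

definition gamma_ideal :: "('m \<Rightarrow> 'a::comm_ring_1) set \<Rightarrow> ('m \<Rightarrow> 'a, 'a) gpoly set" where
  "gamma_ideal N = {p. \<exists>S r. finite S \<and> S \<subseteq> gamma_rels N \<and> p = (\<Sum>g\<in>S. r g * g)}"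

definition mdeg :: "(nat \<times> 'v) multiset \<Rightarrow> nat" where
  "mdeg m = sum_mset (image_mset fst m)"

definition gmonos :: "'v set \<Rightarrow> nat \<Rightarrow> (nat \<times> 'v) multiset set" where
  "gmonos N n = {m. set_mset (image_mset snd m) \<subseteq> N \<and> mdeg m = n}"

text \<open>Hom_A(Gamma^n(N), A): A-linear functionals on the degree-n part of the polynomial ring
  A[X(k,x)]_{x in N} (given by their values on the monomial basis, zero outside it) that
  vanish on the defining ideal.\<close>
definition gamma_dual :: "('m \<Rightarrow> 'a::comm_ring_1) set \<Rightarrow> nat \<Rightarrow> ((nat \<times> ('m \<Rightarrow> 'a)) multiset \<Rightarrow> 'a) set" where
  "gamma_dual N n = {u. (\<forall>m. m \<notin> gmonos N n \<longrightarrow> u m = 0) \<and>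
       (\<forall>p \<in> gamma_ideal N. (\<Sum>m\<in>Poly_Mapping.keys p. u m * Poly_Mapping.lookup p m) = 0)}"

text \<open>For f : N1 -> N2, Gamma(f) sends X(k,x) to X(k, f x), hence a monomial to its image
  monomial; the degreewise dual sends u in Gamma^n(N2)^dual to u o Gamma^n(f).\<close>
definition gamma_dual_map :: "('v1 \<Rightarrow> 'v2) \<Rightarrow> 'v1 set \<Rightarrow> nat \<Rightarrow> ((nat \<times> 'v2) multiset \<Rightarrow> 'a::zero)
                              \<Rightarrow> (nat \<times> 'v1) multiset \<Rightarrow> 'a" where
  "gamma_dual_map f N1 n u =
     (\<lambda>m. if m \<in> gmonos N1 n then u (image_mset (\<lambda>(k, x). (k, f x)) m) else 0)"

end

theory Submission
  imports Defs
begin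

text \<open>Versality applied to maps into the free module of rank one shows that every linear form
  on M extends along the versal map to F, i.e. the dual map F* \<rightarrow> M* is surjective. Hence
  \<Gamma>(F*) \<rightarrow> \<Gamma>(M*) hits every monomial in the generators X(k, x) of \<Gamma>(M*), so two
  functionals on the degree n part of \<Gamma>(M*) that agree after composition agree on all
  monomials.\<close>

lemma versal_dual_map_surj:
  fixes sM :: "'a::comm_ring_1 \<Rightarrow> 'm::ab_group_add \<Rightarrow> 'm"
    and sF :: "'a \<Rightarrow> 'f::ab_group_add \<Rightarrow> 'f"
  assumes "module sF" and "versal sM sF \<phi>"
  shows "dual_module sM \<subseteq> dual_map \<phi> ` dual_module sF"
proof
  fix l assume "l \<in> dual_module sM"
  then have l: "module_hom sM (*) l" by (simp add: dual_module_def)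
  define g where "g = (\<lambda>x (i::nat). if i = 0 then l x else 0)"
  have "lin_to_free sM {0} g"
    unfolding lin_to_free_def g_def
    using module_hom.add[OF l] module_hom.scale[OF l] by (auto simp: fun_eq_iff)
  then obtain h where h: "lin_to_free sF {0} h" "\<forall>x. g x = h (\<phi> x)"
    using assms(2) unfolding versal_def by blast
  define \<mu> where "\<mu> = (\<lambda>y. h y 0)"
  have "module ((*) :: 'a \<Rightarrow> 'a \<Rightarrow> 'a)" by (rule module.intro) (auto simp: algebra_simps)
  then have "\<mu> \<in> dual_module sF"
    using assms(1) h(1)
    by (auto simp: dual_module_def module_hom_def module_hom_axioms_def \<mu>_def lin_to_free_def)
  moreover have "dual_map \<phi> \<mu> = l"
  proof
    fix x
    have "g x 0 = h (\<phi> x) 0" using h(2) by simp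
    then show "dual_map \<phi> \<mu> x = l x" by (simp add: dual_map_def \<mu>_def g_def)
  qed
  ultimately show "l \<in> dual_map \<phi> ` dual_module sF" by blast
qed

lemma gmonos_subset_image:
  assumes "N2 \<subseteq> f ` N1"
  shows "gmonos N2 n \<subseteq> image_mset (\<lambda>(k, x). (k, f x)) ` gmonos N1 n"
proof
  fix m assume m: "m \<in> gmonos N2 n"
  then have snd_in: "snd p \<in> N2" if "p \<in># m" for p
    using that by (auto simp: gmonos_def)
  define g where "g = inv_into N1 f"
  have g: "g x \<in> N1" "f (g x) = x" if "x \<in> N2" for x
    using that assms by (auto simp: g_def inv_into_into f_inv_into_f)
  define m' where "m' = image_mset (\<lambda>(k, x). (k, g x)) m"
  have "mdeg m' = mdeg m"
    by (simp add: mdeg_def m'_def multiset.map_comp o_def case_prod_beta)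
  moreover have "set_mset (image_mset snd m') \<subseteq> N1"
    using snd_in g by (auto simp: m'_def)
  ultimately have "m' \<in> gmonos N1 n"
    using m by (simp add: gmonos_def)
  moreover have "image_mset (\<lambda>(k, x). (k, f x)) m' = m"
    unfolding m'_def multiset.map_comp
    by (rule trans[OF multiset.map_cong0 multiset.map_ident]) (use snd_in g in \<open>auto\<close>)
  ultimately show "m \<in> image_mset (\<lambda>(k, x). (k, f x)) ` gmonos N1 n" by blast
qed

lemma inj_on_gamma_dual_map:
  assumes "N2 \<subseteq> f ` N1"
  shows "inj_on (gamma_dual_map f N1 n) {u. \<forall>m. m \<notin> gmonos N2 n \<longrightarrow> u m = 0}"
proof (rule inj_onI, rule ext)
  fix u v m
  assume u: "u \<in> {u. \<forall>m. m \<notin> gmonos N2 n \<longrightarrow> u m = 0}"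
    and v: "v \<in> {u. \<forall>m. m \<notin> gmonos N2 n \<longrightarrow> u m = 0}"
    and eq: "gamma_dual_map f N1 n u = gamma_dual_map f N1 n v"
  show "u m = v m"
  proof (cases "m \<in> gmonos N2 n")
    case True
    then obtain m' where "m' \<in> gmonos N1 n" "m = image_mset (\<lambda>(k, x). (k, f x)) m'"
      using gmonos_subset_image[OF assms] by blast
    then show ?thesis using fun_cong[OF eq, of m'] by (simp add: gamma_dual_map_def)
  qed (use u v in simp)
qed

theorem lemma4p1:
  fixes sM :: "'a::comm_ring_1 \<Rightarrow> 'm::ab_group_add \<Rightarrow> 'm"
    and sF :: "'a \<Rightarrow> 'f::ab_group_add \<Rightarrow> 'f"
    and \<phi> :: "'m \<Rightarrow> 'f"
  assumes "noetherian_ring TYPE('a)"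
    and "fin_gen_module sM"
    and "fin_gen_free_module sF"
    and "versal sM sF \<phi>"
  shows "\<forall>n. inj_on (gamma_dual_map (dual_map \<phi>) (dual_module sF) n)
                    (gamma_dual (dual_module sM) n)"
proof
  fix n
  have "dual_module sM \<subseteq> dual_map \<phi> ` dual_module sF"
    using assms(3) by (intro versal_dual_map_surj[OF _ assms(4)]) (simp add: fin_gen_free_module_def)
  then show "inj_on (gamma_dual_map (dual_map \<phi>) (dual_module sF) n)
               (gamma_dual (dual_module sM) n)"
    by (rule inj_on_subset[OF inj_on_gamma_dual_map]) (auto simp: gamma_dual_def)
qed

end
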